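(* Let $S$ be a semigroup and let $a,b\in S$ satisfy $a=aba$ and $b=bab$. Then \[(aSa,\star_b)\cong(bSb,\star_a)\cong(aSb,\cdot)\cong(bSa,\cdot),\] and all four are monoids.
   Context: For elements $u,v$ of a semigroup $S$, $uSv=\{uxv: x\in S\}$. For $c\in S$, $\star_c$ denotes the sandwich operation $x\star_c y=xcy$ on $S$. $(T,\star_c)$ denotes the subset $T\subseteq S$ equipped with the operation $\star_c$ (here $T$ is closed under it), and $(T,\cdot)$ denotes $T$ with the original operation of $S$. *)

theory Defs
  imports Main "HOL-Algebra.Group"
begin

definition sandset :: "'a::semigroup_mult \<Rightarrow> 'a \<Rightarrow> 'a set" where
  "sandset u v = {u * x * v | x. True}"

text \<open>The unit field is left unspecified; monoid-ness is expressed existentially below,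
  and isomorphism in HOL-Algebra does not refer to the unit field.\<close>
definition sandstruct :: "'a::semigroup_mult set \<Rightarrow> 'a \<Rightarrow> 'a monoid" where
  "sandstruct T c = \<lparr>carrier = T, mult = (\<lambda>x y. x * c * y), one = undefined\<rparr>"

definition plainstruct :: "'a::semigroup_mult set \<Rightarrow> 'a monoid" where
  "plainstruct T = \<lparr>carrier = T, mult = (\<lambda>x y. x * y), one = undefined\<rparr>"

definition is_monoid :: "'a monoid \<Rightarrow> bool" where
  "is_monoid G \<longleftrightarrow> (\<exists>e. monoid (G\<lparr>one := e\<rparr>))"

end

theory Submission
  imports Defs
begin

text \<open>Under \<open>a = a b a\<close> and \<open>b = b a b\<close> the element \<open>a\<close> is a two-sided unit of
  \<open>(aSa, \<star>\<^sub>b)\<close> and \<open>a b\<close> one of \<open>(aSb, \<cdot>)\<close>. The isomorphisms are the sandwich maps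
  \<open>x \<mapsto> b x b\<close> from \<open>(aSa, \<star>\<^sub>b)\<close> to \<open>(bSb, \<star>\<^sub>a)\<close>, \<open>x \<mapsto> a x\<close> from \<open>(bSb, \<star>\<^sub>a)\<close> to
  \<open>(aSb, \<cdot>)\<close> and \<open>x \<mapsto> b x a\<close> from \<open>(aSb, \<cdot>)\<close> to \<open>(bSa, \<cdot>)\<close>, each inverted by the
  sandwich map with \<open>a\<close> and \<open>b\<close> exchanged; all identities needed are instances of the
  two absorption laws.\<close>

lemma iso_by_inverse_maps:
  assumes "\<And>x. x \<in> carrier G \<Longrightarrow> f x \<in> carrier H"
    and "\<And>y. y \<in> carrier H \<Longrightarrow> g y \<in> carrier G"
    and "\<And>x. x \<in> carrier G \<Longrightarrow> g (f x) = x"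
    and "\<And>y. y \<in> carrier H \<Longrightarrow> f (g y) = y"
    and "\<And>x y. x \<in> carrier G \<Longrightarrow> y \<in> carrier G \<Longrightarrow> f (x \<otimes>\<^bsub>G\<^esub> y) = f x \<otimes>\<^bsub>H\<^esub> f y"
  shows "G \<cong> H"
proof (rule is_isoI)
  have "bij_betw f (carrier G) (carrier H)"
    by (rule bij_betw_byWitness[where f'=g]) (use assms in auto)
  then show "f \<in> iso G H"
    using assms unfolding iso_def hom_def by auto
qed

lemma sandset_iff: "z \<in> sandset u v \<longleftrightarrow> (\<exists>x. z = u * x * v)"
  unfolding sandset_def by auto

lemma sandsetI: "u * x * v \<in> sandset u v"
  by (auto simp: sandset_iff)

lemma sandset_mult_left:
  assumes "x \<in> sandset u v"
  shows "c * x \<in> sandset c v"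
  using assms by (auto simp: sandset_iff) (metis mult.assoc)

lemma sandset_mult_right:
  assumes "x \<in> sandset u v"
  shows "x * c \<in> sandset u c"
  using assms by (auto simp: sandset_iff) (metis mult.assoc)

lemma sandset_mult_closed:
  assumes "x \<in> sandset u v" and "y \<in> sandset w z"
  shows "x * y \<in> sandset u z"
  using assms by (auto simp: sandset_iff) (metis mult.assoc)

lemma sandset_sandwich_closed:
  assumes "x \<in> sandset u v" and "y \<in> sandset w z"
  shows "x * c * y \<in> sandset u z"
  using sandset_mult_right[OF assms(1)] assms(2) by (rule sandset_mult_closed)

lemma inner_inverse_absorb:
  fixes a b :: "'a::semigroup_mult"
  assumes "a * b * a = a"
  shows "a * (b * a) = a" and "a * (b * (a * z)) = a * z"
  using assms by (metis mult.assoc)+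

lemma is_monoidI:
  fixes G (structure)
  assumes "\<And>x y. x \<in> carrier G \<Longrightarrow> y \<in> carrier G \<Longrightarrow> x \<otimes> y \<in> carrier G"
    and "\<And>x y z. x \<in> carrier G \<Longrightarrow> y \<in> carrier G \<Longrightarrow> z \<in> carrier G \<Longrightarrow>
      x \<otimes> y \<otimes> z = x \<otimes> (y \<otimes> z)"
    and "e \<in> carrier G"
    and "\<And>x. x \<in> carrier G \<Longrightarrow> e \<otimes> x = x"
    and "\<And>x. x \<in> carrier G \<Longrightarrow> x \<otimes> e = x"
  shows "is_monoid G"
  unfolding is_monoid_def by (rule exI[of _ e], rule monoidI) (simp_all add: assms)

lemma is_monoid_sandstructI:
  assumes "\<And>x y. x \<in> T \<Longrightarrow> y \<in> T \<Longrightarrow> x * c * y \<in> T"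
    and "e \<in> T"
    and "\<And>x. x \<in> T \<Longrightarrow> e * c * x = x"
    and "\<And>x. x \<in> T \<Longrightarrow> x * c * e = x"
  shows "is_monoid (sandstruct T c)"
  by (rule is_monoidI[of _ e]) (simp_all add: sandstruct_def assms[unfolded mult.assoc] mult.assoc)

lemma is_monoid_plainstructI:
  assumes "\<And>x y. x \<in> T \<Longrightarrow> y \<in> T \<Longrightarrow> x * y \<in> T"
    and "e \<in> T"
    and "\<And>x. x \<in> T \<Longrightarrow> e * x = x"
    and "\<And>x. x \<in> T \<Longrightarrow> x * e = x"
  shows "is_monoid (plainstruct T)"
  by (rule is_monoidI[of _ e]) (simp_all add: plainstruct_def assms[unfolded mult.assoc] mult.assoc)

lemma is_monoid_sandstruct_corner:
  fixes a b :: "'a::semigroup_mult"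
  assumes "a * b * a = a"
  shows "is_monoid (sandstruct (sandset a a) b)"
proof (rule is_monoid_sandstructI)
  note absorb = mult.assoc inner_inverse_absorb[OF assms]
  show "x * b * y \<in> sandset a a" if "x \<in> sandset a a" and "y \<in> sandset a a" for x y
    using that by (rule sandset_sandwich_closed)
  show "a \<in> sandset a a"
    using sandsetI[of a b a] assms by simp
  show "a * b * x = x" and "x * b * a = x" if "x \<in> sandset a a" for x
    using that by (auto simp: sandset_iff absorb)
qed

lemma is_monoid_plainstruct_sandset:
  fixes a b :: "'a::semigroup_mult"
  assumes "a * b * a = a" and "b * a * b = b"
  shows "is_monoid (plainstruct (sandset a b))"
proof (rule is_monoid_plainstructI)
  note absorb = mult.assoc inner_inverse_absorb[OF assms(1)] inner_inverse_absorb[OF assms(2)]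
  show "x * y \<in> sandset a b" if "x \<in> sandset a b" and "y \<in> sandset a b" for x y
    using that by (rule sandset_mult_closed)
  show "a * b \<in> sandset a b"
    using sandsetI[of a "b * a" b] by (simp add: absorb)
  show "a * b * x = x" and "x * (a * b) = x" if "x \<in> sandset a b" for x
    using that by (auto simp: sandset_iff absorb)
qed

lemma sandstruct_corner_iso:
  fixes a b :: "'a::semigroup_mult"
  assumes "a * b * a = a" and "b * a * b = b"
  shows "sandstruct (sandset a a) b \<cong> sandstruct (sandset b b) a"
proof (rule iso_by_inverse_maps[where f = "\<lambda>x. b * x * b" and g = "\<lambda>y. a * y * a"])
  note absorb = mult.assoc inner_inverse_absorb[OF assms(1)] inner_inverse_absorb[OF assms(2)]
  show "b * x * b \<in> carrier (sandstruct (sandset b b) a)" for x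
    by (simp add: sandstruct_def sandsetI)
  show "a * y * a \<in> carrier (sandstruct (sandset a a) b)" for y
    by (simp add: sandstruct_def sandsetI)
  show "a * (b * x * b) * a = x" if "x \<in> carrier (sandstruct (sandset a a) b)" for x
    using that by (auto simp: sandstruct_def sandset_iff absorb)
  show "b * (a * y * a) * b = y" if "y \<in> carrier (sandstruct (sandset b b) a)" for y
    using that by (auto simp: sandstruct_def sandset_iff absorb)
  show "b * (x \<otimes>\<^bsub>sandstruct (sandset a a) b\<^esub> y) * b
      = b * x * b \<otimes>\<^bsub>sandstruct (sandset b b) a\<^esub> (b * y * b)" for x y
    by (simp add: sandstruct_def absorb)
qed

lemma sandstruct_iso_plainstruct:
  fixes a b :: "'a::semigroup_mult"
  assumes "a * b * a = a" and "b * a * b = b"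
  shows "sandstruct (sandset b b) a \<cong> plainstruct (sandset a b)"
proof (rule iso_by_inverse_maps[where f = "\<lambda>x. a * x" and g = "\<lambda>y. b * y"])
  note absorb = mult.assoc inner_inverse_absorb[OF assms(1)] inner_inverse_absorb[OF assms(2)]
  show "a * x \<in> carrier (plainstruct (sandset a b))"
    if "x \<in> carrier (sandstruct (sandset b b) a)" for x
    using that by (simp add: sandstruct_def plainstruct_def sandset_mult_left)
  show "b * y \<in> carrier (sandstruct (sandset b b) a)"
    if "y \<in> carrier (plainstruct (sandset a b))" for y
    using that by (simp add: sandstruct_def plainstruct_def sandset_mult_left)
  show "b * (a * x) = x" if "x \<in> carrier (sandstruct (sandset b b) a)" for x
    using that by (auto simp: sandstruct_def sandset_iff absorb)
  show "a * (b * y) = y" if "y \<in> carrier (plainstruct (sandset a b))" for y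
    using that by (auto simp: plainstruct_def sandset_iff absorb)
  show "a * (x \<otimes>\<^bsub>sandstruct (sandset b b) a\<^esub> y) = a * x \<otimes>\<^bsub>plainstruct (sandset a b)\<^esub> (a * y)"
    for x y
    by (simp add: sandstruct_def plainstruct_def mult.assoc)
qed

lemma plainstruct_sandset_swap_iso:
  fixes a b :: "'a::semigroup_mult"
  assumes "a * b * a = a" and "b * a * b = b"
  shows "plainstruct (sandset a b) \<cong> plainstruct (sandset b a)"
proof (rule iso_by_inverse_maps[where f = "\<lambda>x. b * x * a" and g = "\<lambda>y. a * y * b"])
  note absorb = mult.assoc inner_inverse_absorb[OF assms(1)] inner_inverse_absorb[OF assms(2)]
  show "b * x * a \<in> carrier (plainstruct (sandset b a))" for x
    by (simp add: plainstruct_def sandsetI)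
  show "a * y * b \<in> carrier (plainstruct (sandset a b))" for y
    by (simp add: plainstruct_def sandsetI)
  show "a * (b * x * a) * b = x" if "x \<in> carrier (plainstruct (sandset a b))" for x
    using that by (auto simp: plainstruct_def sandset_iff absorb)
  show "b * (a * y * b) * a = y" if "y \<in> carrier (plainstruct (sandset b a))" for y
    using that by (auto simp: plainstruct_def sandset_iff absorb)
  show "b * (x \<otimes>\<^bsub>plainstruct (sandset a b)\<^esub> y) * a
      = b * x * a \<otimes>\<^bsub>plainstruct (sandset b a)\<^esub> (b * y * a)"
    if "x \<in> carrier (plainstruct (sandset a b))" and "y \<in> carrier (plainstruct (sandset a b))" for x y
    using that by (auto simp: plainstruct_def sandset_iff absorb)
qed

theorem lemma2p3:
  fixes a b :: "'a::semigroup_mult"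
  assumes "a = a * b * a" and "b = b * a * b"
  shows "sandstruct (sandset a a) b \<cong> sandstruct (sandset b b) a
       \<and> sandstruct (sandset b b) a \<cong> plainstruct (sandset a b)
       \<and> plainstruct (sandset a b) \<cong> plainstruct (sandset b a)
       \<and> is_monoid (sandstruct (sandset a a) b)
       \<and> is_monoid (sandstruct (sandset b b) a)
       \<and> is_monoid (plainstruct (sandset a b))
       \<and> is_monoid (plainstruct (sandset b a))"
proof -
  have aba: "a * b * a = a" and bab: "b * a * b = b"
    using assms by simp_all
  show ?thesis
    using sandstruct_corner_iso[OF aba bab] sandstruct_iso_plainstruct[OF aba bab]
      plainstruct_sandset_swap_iso[OF aba bab]
      is_monoid_sandstruct_corner[OF aba] is_monoid_sandstruct_corner[OF bab]
      is_monoid_plainstruct_sandset[OF aba bab] is_monoid_plainstruct_sandset[OF bab aba]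
    by blast
qed

end
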